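(* Let $G\le\mathrm{O}(d)$ have closed orbits. For all $x,y\in\mathbb{R}^d$ there exists a bijection from $C([x],[y])$ to the set of orbits of the group $\mathrm{stab}_G(x)$ acting on $\arg\min_{q\in[y]}\|q-x\|$.
   Context: For $x\in\mathbb{R}^d$, $[x]:=\{gx:g\in G\}$, and $\mathbb{R}^d/G$ has the quotient metric $d([x],[y]):=\inf_{p\in[x],q\in[y]}\|p-q\|$. In a metric space $(M,d)$, a curve $\gamma:[0,L]\to M$ with $L\ge0$ is a minimal geodesic if $d(\gamma(s),\gamma(t))=|s-t|$ for all $s,t\in[0,L]$; for $a,b\in M$, $C(a,b)$ is the set of minimal geodesics $\gamma$ with $\gamma(0)=a$ and $\gamma(L)=b$ (so $L=d(a,b)$). The group $\mathrm{stab}_G(x)$ acts on $\arg\min_{q\in[y]}\|q-x\|$ by $q\mapsto gq$. *)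

theory Defs
  imports "HOL-Analysis.Analysis" "HOL-Library.FuncSet"
begin

definition orth_subgroup :: "(real^'n^'n) set \<Rightarrow> bool" where
  "orth_subgroup G \<longleftrightarrow> (\<forall>g\<in>G. orthogonal_matrix g) \<and> mat 1 \<in> G \<and>
     (\<forall>g\<in>G. \<forall>h\<in>G. g ** h \<in> G) \<and> (\<forall>g\<in>G. matrix_inv g \<in> G)"

definition orb :: "(real^'n^'n) set \<Rightarrow> real^'n \<Rightarrow> (real^'n) set" where
  "orb G x = {g *v x | g. g \<in> G}"

definition orbit_space :: "(real^'n^'n) set \<Rightarrow> (real^'n) set set" where
  "orbit_space G = {orb G x | x. True}"

definition qdist :: "(real^'n) set \<Rightarrow> (real^'n) set \<Rightarrow> real" where
  "qdist A B = Inf {norm (p - q) | p q. p \<in> A \<and> q \<in> B}"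

definition min_geodesic :: "'a set \<Rightarrow> ('a \<Rightarrow> 'a \<Rightarrow> real) \<Rightarrow> real \<Rightarrow> (real \<Rightarrow> 'a) \<Rightarrow> bool" where
  "min_geodesic M dst L \<gamma> \<longleftrightarrow> L \<ge> 0 \<and> \<gamma> \<in> {0..L} \<rightarrow>\<^sub>E M \<and>
     (\<forall>s\<in>{0..L}. \<forall>t\<in>{0..L}. dst (\<gamma> s) (\<gamma> t) = \<bar>s - t\<bar>)"

definition geodesics_between :: "'a set \<Rightarrow> ('a \<Rightarrow> 'a \<Rightarrow> real) \<Rightarrow> 'a \<Rightarrow> 'a \<Rightarrow> (real \<Rightarrow> 'a) set" where
  "geodesics_between M dst a b =
     {\<gamma>. min_geodesic M dst (dst a b) \<gamma> \<and> \<gamma> 0 = a \<and> \<gamma> (dst a b) = b}"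

definition stab :: "(real^'n^'n) set \<Rightarrow> real^'n \<Rightarrow> (real^'n^'n) set" where
  "stab G x = {g \<in> G. g *v x = x}"

definition closest_points :: "(real^'n^'n) set \<Rightarrow> real^'n \<Rightarrow> real^'n \<Rightarrow> (real^'n) set" where
  "closest_points G x y =
     {q \<in> orb G y. \<forall>q'\<in>orb G y. norm (q - x) \<le> norm (q' - x)}"

definition action_orbits :: "(real^'n^'n) set \<Rightarrow> (real^'n) set \<Rightarrow> (real^'n) set set" where
  "action_orbits H S = {{g *v q | g. g \<in> H} | q. q \<in> S}"

end

theory Submission
  imports Defs
begin

text \<open>
  Every closest point \<open>q \<in> [y]\<close> to \<open>x\<close> yields a minimal geodesic, the image in the orbit
  space of the segment from \<open>x\<close> to \<open>q\<close>, and \<open>stab\<^sub>G(x)\<close>-related closest points yield the same one.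
  Conversely, equality in the triangle inequality pins geodesics down: lifting the midpoint of a
  geodesic to a point \<open>z\<close> at distance \<open>L/2\<close> from \<open>x\<close>, and then \<open>[y]\<close> to a point \<open>q\<close> at
  distance \<open>L/2\<close> from \<open>z\<close>, forces \<open>z\<close> to be the midpoint of \<open>x\<close> and \<open>q\<close> and every other point
  of the geodesic to lie on the segment as well. If two closest points \<open>q, q'\<close> give the same
  geodesic, some \<open>g \<in> G\<close> maps the midpoint of \<open>x, q'\<close> to that of \<open>x, q\<close>; the same rigidity
  shows \<open>g x = x\<close>, hence \<open>g q' = q\<close>.
\<close>

lemma weighted_point_of_dist_sum_le:
  fixes a b c :: "'a::real_inner"
  assumes "dist a b \<le> r" "dist b c \<le> t" "r + t \<le> dist a c"
  shows "(r + t) *\<^sub>R b = t *\<^sub>R a + r *\<^sub>R c"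
proof -
  have "dist a c \<le> dist a b + dist b c" by (rule dist_triangle)
  then have r: "norm (a - b) = r" and t: "norm (b - c) = t" and "norm (a - c) = r + t"
    using assms by (simp_all add: dist_norm)
  then have "norm ((a - b) + (b - c)) = norm (a - b) + norm (b - c)" by simp
  then have "norm (a - b) *\<^sub>R (b - c) = norm (b - c) *\<^sub>R (a - b)"
    by (rule norm_triangle_eq[THEN iffD1])
  then show ?thesis using r t by (simp add: algebra_simps)
qed

lemma midpoint_of_dist_le:
  fixes a b c :: "'a::real_inner"
  assumes "dist a b \<le> r" "dist b c \<le> r" "2 * r \<le> dist a c"
  shows "b = midpoint a c"
proof (cases "r = 0")
  case True
  then show ?thesis using assms(1,2) by simp
next
  case False
  have "(2 * r) *\<^sub>R b = (2 * r) *\<^sub>R midpoint a c"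
    using weighted_point_of_dist_sum_le[OF assms(1,2)] assms(3)
    by (simp add: midpoint_def scaleR_add_right)
  then show ?thesis using False by simp
qed

lemma segment_point_of_scaled_eq:
  fixes x q w :: "'a::real_vector"
  assumes "L \<noteq> 0" "L *\<^sub>R w = (L - s) *\<^sub>R x + s *\<^sub>R q"
  shows "w = x + (s / L) *\<^sub>R (q - x)"
proof -
  have "w = (1 / L) *\<^sub>R (L *\<^sub>R w)" using assms(1) by simp
  also have "\<dots> = (1 / L) *\<^sub>R ((L - s) *\<^sub>R x + s *\<^sub>R q)" by (simp only: assms(2))
  also have "\<dots> = x + (s / L) *\<^sub>R (q - x)"
    using assms(1) by (simp add: diff_divide_distrib algebra_simps)
  finally show ?thesis .
qed

lemma segment_point_of_dists:
  fixes x q w :: "real^'n"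
  assumes L: "dist x q = L" "L > 0" and s: "s \<in> {0..L}"
    and "dist (midpoint x q) w \<le> \<bar>L/2 - s\<bar>" "s \<le> dist x w" "L - s \<le> dist w q"
  shows "w = x + (s / L) *\<^sub>R (q - x)"
proof (rule segment_point_of_scaled_eq)
  let ?z = "midpoint x q"
  have xz: "dist x ?z = L/2" and zq: "dist ?z q = L/2" using L dist_midpoint by auto
  have "(L *\<^sub>R w) $ i = ((L - s) *\<^sub>R x + s *\<^sub>R q) $ i" for i
  proof (cases "s \<le> L/2")
    case True
    have "(L - s) *\<^sub>R ?z = (L/2) *\<^sub>R w + (L/2 - s) *\<^sub>R q"
      using weighted_point_of_dist_sum_le[of w ?z "L/2 - s" q "L/2"] assms True zq
      by (simp add: dist_commute)
    from arg_cong[OF this, of "\<lambda>v. v $ i"] show ?thesis by (simp add: midpoint_def field_simps)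
  next
    case False
    have "s *\<^sub>R ?z = (s - L/2) *\<^sub>R x + (L/2) *\<^sub>R w"
      using weighted_point_of_dist_sum_le[of x ?z "L/2" w "s - L/2"] assms False xz
      by (simp add: dist_commute)
    from arg_cong[OF this, of "\<lambda>v. v $ i"] show ?thesis by (simp add: midpoint_def field_simps)
  qed
  then show "L *\<^sub>R w = (L - s) *\<^sub>R x + s *\<^sub>R q" by (simp only: vec_eq_iff) blast
qed (use L in simp)

lemma norm_diff_segment_points:
  fixes x q :: "'a::real_normed_vector"
  assumes "s \<in> {0..norm (q - x)}" "t \<in> {0..norm (q - x)}"
  shows "norm ((x + (s / norm (q - x)) *\<^sub>R (q - x)) - (x + (t / norm (q - x)) *\<^sub>R (q - x)))
    = \<bar>s - t\<bar>"
proof (cases "q = x")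
  case True
  then show ?thesis using assms by simp
next
  case False
  have "(x + (s / norm (q - x)) *\<^sub>R (q - x)) - (x + (t / norm (q - x)) *\<^sub>R (q - x))
      = ((s - t) / norm (q - x)) *\<^sub>R (q - x)"
    by (simp add: diff_divide_distrib algebra_simps)
  then show ?thesis using False by simp
qed

lemma segment_point_endpoint:
  fixes x q :: "'a::real_normed_vector"
  shows "x + (norm (q - x) / norm (q - x)) *\<^sub>R (q - x) = q"
  by (cases "q = x") auto

lemma orthogonal_matrix_norm:
  fixes g :: "real^'n^'n"
  assumes "orthogonal_matrix g"
  shows "norm (g *v v) = norm v"
  using assms orthogonal_transformation_matrix[of "(*v) g"]
  by (simp add: orthogonal_transformation_norm matrix_vector_mul_linear)

lemma orthogonal_matrix_matrix_inv:
  assumes "orthogonal_matrix g"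
  shows "matrix_inv g ** g = mat 1" "g ** matrix_inv g = mat 1"
proof -
  have "\<exists>A. g ** A = mat 1 \<and> A ** g = mat 1"
    using assms unfolding orthogonal_matrix_def by blast
  then have "g ** matrix_inv g = mat 1 \<and> matrix_inv g ** g = mat 1"
    unfolding matrix_inv_def by (rule someI_ex)
  then show "matrix_inv g ** g = mat 1" "g ** matrix_inv g = mat 1" by auto
qed

lemma orth_subgroup_norm:
  "orth_subgroup G \<Longrightarrow> g \<in> G \<Longrightarrow> norm (g *v v) = norm v"
  unfolding orth_subgroup_def by (simp add: orthogonal_matrix_norm)

lemma orth_subgroup_inverse:
  assumes "orth_subgroup G" "g \<in> G"
  shows "matrix_inv g \<in> G" "matrix_inv g *v (g *v v) = v"
  using assms orthogonal_matrix_matrix_inv[of g] unfolding orth_subgroup_def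
  by (auto simp: matrix_vector_mul_assoc)

lemma orth_subgroup_mult:
  "orth_subgroup G \<Longrightarrow> g \<in> G \<Longrightarrow> h \<in> G \<Longrightarrow> g ** h \<in> G"
  unfolding orth_subgroup_def by blast

lemma orb_refl: "orth_subgroup G \<Longrightarrow> z \<in> orb G z"
  unfolding orth_subgroup_def orb_def by force

lemma orb_mult: "g \<in> G \<Longrightarrow> g *v z \<in> orb G z"
  unfolding orb_def by blast

lemma orb_memE:
  assumes "a \<in> orb G b"
  obtains g where "g \<in> G" "g *v b = a"
  using assms unfolding orb_def by blast

lemma orb_eq:
  assumes G: "orth_subgroup G" and "w \<in> orb G z"
  shows "orb G w = orb G z"
proof -
  obtain g where g: "g \<in> G" "g *v z = w" using assms(2) by (rule orb_memE)
  have "orb G w \<subseteq> orb G z"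
    using g orth_subgroup_mult[OF G] by (auto simp: orb_def matrix_vector_mul_assoc)
  moreover have "k *v z \<in> orb G w" if "k \<in> G" for k
  proof -
    have "k *v z = (k ** matrix_inv g) *v w"
      using orth_subgroup_inverse[OF G g(1)] g(2)[symmetric]
      by (simp add: matrix_vector_mul_assoc[symmetric])
    then show ?thesis
      using orth_subgroup_mult[OF G that orth_subgroup_inverse(1)[OF G g(1)]] orb_mult by metis
  qed
  ultimately show ?thesis unfolding orb_def by blast
qed

lemma orb_eq_iff: "orth_subgroup G \<Longrightarrow> orb G w = orb G z \<longleftrightarrow> w \<in> orb G z"
  using orb_eq orb_refl by metis

lemma orth_subgroup_stab:
  assumes G: "orth_subgroup G"
  shows "orth_subgroup (stab G x)"
proof -
  have "matrix_inv g *v x = x" if "g \<in> G" "g *v x = x" for g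
    using orth_subgroup_inverse(2)[OF G that(1), of x] that(2) by simp
  then show ?thesis
    using G orth_subgroup_inverse(1)[OF G]
    unfolding orth_subgroup_def stab_def by (auto simp: matrix_vector_mul_assoc[symmetric])
qed

lemma qdist_le: "p \<in> A \<Longrightarrow> q \<in> B \<Longrightarrow> qdist A B \<le> norm (p - q)"
  unfolding qdist_def by (rule cInf_lower) (auto intro: bdd_belowI[where m=0])

lemma qdist_commute: "qdist A B = qdist B A"
  unfolding qdist_def by (metis (no_types, opaque_lifting) norm_minus_commute)

lemma bij_betw_image_classes:
  assumes fibres: "\<And>p q. p \<in> S \<Longrightarrow> q \<in> S \<Longrightarrow> f p = f q \<longleftrightarrow> c p = c q"
  shows "bij_betw (\<lambda>v. c (SOME p. p \<in> S \<and> f p = v)) (f ` S) (c ` S)"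
proof -
  define rep where "rep v = (SOME p. p \<in> S \<and> f p = v)" for v
  have class_rep: "c (rep (f q)) = c q" if "q \<in> S" for q
  proof -
    have "rep (f q) \<in> S \<and> f (rep (f q)) = f q"
      unfolding rep_def using someI[of "\<lambda>p. p \<in> S \<and> f p = f q" q] that by blast
    then show ?thesis using fibres[of "rep (f q)" q] that by blast
  qed
  have "inj_on (\<lambda>v. c (rep v)) (f ` S)"
  proof (rule inj_onI)
    fix u v assume "u \<in> f ` S" "v \<in> f ` S" and eq: "c (rep u) = c (rep v)"
    then obtain p q where "p \<in> S" "u = f p" "q \<in> S" "v = f q" by blast
    then show "u = v" using eq class_rep fibres by metis
  qed
  moreover have "(\<lambda>v. c (rep v)) ` f ` S = c ` S"
    unfolding image_image using class_rep by (rule image_cong[OF refl])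
  ultimately show ?thesis unfolding bij_betw_def rep_def by blast
qed

text \<open>The \<open>undefined\<close> branch makes the curve extensional on \<open>[0, |q - x|]\<close>, as \<open>min_geodesic\<close>
  requires.\<close>

definition orbit_segment :: "(real^'n^'n) set \<Rightarrow> real^'n \<Rightarrow> real^'n \<Rightarrow> real \<Rightarrow> (real^'n) set"
  where "orbit_segment G x q s =
    (if s \<in> {0..norm (q - x)} then orb G (x + (s / norm (q - x)) *\<^sub>R (q - x)) else undefined)"

lemma orbit_segment_stab:
  assumes G: "orth_subgroup G" and h: "h \<in> stab G x"
  shows "orbit_segment G x (h *v q) = orbit_segment G x q"
proof -
  have hG: "h \<in> G" and hx: "h *v x = x" using h unfolding stab_def by auto
  have "norm (h *v q - x) = norm (q - x)"
    using orth_subgroup_norm[OF G hG, of "q - x"] hx by (simp add: matrix_vector_mult_diff_distrib)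
  moreover have "orb G (x + c *\<^sub>R (h *v q - x)) = orb G (x + c *\<^sub>R (q - x))" for c
  proof -
    have "x + c *\<^sub>R (h *v q - x) = h *v (x + c *\<^sub>R (q - x))"
      using hx by (simp add: algebra_simps)
    then show ?thesis using orb_eq[OF G orb_mult[OF hG]] by simp
  qed
  ultimately show ?thesis unfolding orbit_segment_def by presburger
qed

context
  fixes G :: "(real^'n^'n) set"
  assumes G: "orth_subgroup G" and closed_orb: "\<And>z. closed (orb G z)"
begin

lemma qdist_orb_attained:
  obtains q where "q \<in> orb G b" "norm (a - q) = qdist (orb G a) (orb G b)"
proof -
  obtain q where q: "q \<in> orb G b" and min: "\<And>w. w \<in> orb G b \<Longrightarrow> dist a q \<le> dist a w"
    using distance_attains_inf[of "orb G b" a] closed_orb orb_refl[OF G] by blast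
  have "norm (a - q) \<le> qdist (orb G a) (orb G b)"
    unfolding qdist_def
  proof (rule cInf_greatest)
    show "{norm (p - w) |p w. p \<in> orb G a \<and> w \<in> orb G b} \<noteq> {}"
      using orb_refl[OF G] by blast
  next
    fix r assume "r \<in> {norm (p - w) |p w. p \<in> orb G a \<and> w \<in> orb G b}"
    then obtain g w where g: "g \<in> G" and w: "w \<in> orb G b" and r: "r = norm (g *v a - w)"
      unfolding orb_def by blast
    have "r = norm (a - matrix_inv g *v w)"
      using orth_subgroup_norm[OF G orth_subgroup_inverse(1)[OF G g], of "g *v a - w"]
      by (simp add: r orth_subgroup_inverse(2)[OF G g] matrix_vector_mult_diff_distrib)
    moreover have "matrix_inv g *v w \<in> orb G b"
      using orb_eq[OF G w] orb_mult[OF orth_subgroup_inverse(1)[OF G g]] by blast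
    ultimately show "norm (a - q) \<le> r" using min by (simp add: dist_norm)
  qed
  then have "norm (a - q) = qdist (orb G a) (orb G b)"
    using qdist_le[OF orb_refl[OF G, of a] q] by linarith
  then show ?thesis using that q by blast
qed

lemma orbit_space_attained:
  assumes "A \<in> orbit_space G"
  obtains q where "q \<in> A" "orb G q = A" "norm (a - q) = qdist (orb G a) A"
proof -
  obtain b where A: "A = orb G b" using assms unfolding orbit_space_def by blast
  obtain q where "q \<in> orb G b" "norm (a - q) = qdist (orb G a) (orb G b)"
    by (rule qdist_orb_attained)
  then show ?thesis using that orb_eq[OF G] unfolding A by blast
qed

lemma qdist_orb_triangle:
  "qdist (orb G a) (orb G c) \<le> qdist (orb G a) (orb G b) + qdist (orb G b) (orb G c)"
proof -
  obtain q where q: "q \<in> orb G b" "norm (a - q) = qdist (orb G a) (orb G b)"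
    by (rule qdist_orb_attained)
  obtain r where r: "r \<in> orb G c" "norm (q - r) = qdist (orb G q) (orb G c)"
    by (rule qdist_orb_attained)
  have "qdist (orb G a) (orb G c) \<le> norm (a - r)" by (rule qdist_le[OF orb_refl[OF G] r(1)])
  also have "\<dots> \<le> norm (a - q) + norm (q - r)" using norm_triangle_ineq[of "a - q" "q - r"] by simp
  finally show ?thesis using q r orb_eq[OF G q(1)] by simp
qed

lemma closest_points_iff:
  "q \<in> closest_points G x y \<longleftrightarrow> q \<in> orb G y \<and> norm (q - x) = qdist (orb G x) (orb G y)"
proof -
  obtain q0 where q0: "q0 \<in> orb G y" "norm (x - q0) = qdist (orb G x) (orb G y)"
    by (rule qdist_orb_attained)
  have "qdist (orb G x) (orb G y) \<le> norm (q' - x)" if "q' \<in> orb G y" for q'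
    using qdist_le[OF orb_refl[OF G] that] by (metis norm_minus_commute)
  then show ?thesis
    using q0 unfolding closest_points_def by (force simp: norm_minus_commute)
qed

lemma orbit_segment_geodesic:
  assumes q: "q \<in> closest_points G x y"
  shows "orbit_segment G x q \<in> geodesics_between (orbit_space G) qdist (orb G x) (orb G y)"
proof -
  define L where "L = norm (q - x)"
  define p where "p s = x + (s / L) *\<^sub>R (q - x)" for s
  have qy: "q \<in> orb G y" and L: "L = qdist (orb G x) (orb G y)"
    using q unfolding closest_points_iff L_def by auto
  have p_dist: "norm (p s - p t) = \<bar>s - t\<bar>" if "s \<in> {0..L}" "t \<in> {0..L}" for s t
    using norm_diff_segment_points that unfolding p_def L_def by blast
  have pL: "p L = q" unfolding p_def L_def by (rule segment_point_endpoint)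
  have ordered: "qdist (orb G (p s)) (orb G (p t)) = t - s" if "0 \<le> s" "s \<le> t" "t \<le> L" for s t
  proof -
    have "qdist (orb G (p s)) (orb G (p t)) \<le> t - s"
      using qdist_le[OF orb_refl[OF G, of "p s"] orb_refl[OF G, of "p t"]] p_dist[of s t] that
      by simp
    moreover have "qdist (orb G x) (orb G (p s)) \<le> s"
      using qdist_le[OF orb_refl[OF G] orb_refl[OF G], of x "p s"] p_dist[of 0 s] that
      by (simp add: p_def)
    moreover have "qdist (orb G (p t)) (orb G y) \<le> L - t"
      using qdist_le[OF orb_refl[OF G] qy, of "p t"] p_dist[of t L] that pL by simp
    moreover have "L \<le> qdist (orb G x) (orb G (p s)) + qdist (orb G (p s)) (orb G (p t))
        + qdist (orb G (p t)) (orb G y)"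
      using qdist_orb_triangle[of x y "p s"] qdist_orb_triangle[of "p s" y "p t"] L by linarith
    ultimately show ?thesis by linarith
  qed
  have dist: "qdist (orb G (p s)) (orb G (p t)) = \<bar>s - t\<bar>" if "s \<in> {0..L}" "t \<in> {0..L}" for s t
  proof (cases "s \<le> t")
    case True
    then show ?thesis using ordered[of s t] that by simp
  next
    case False
    then show ?thesis
      using ordered[of t s] that qdist_commute[of "orb G (p s)"] by simp
  qed
  have seg: "orbit_segment G x q s = (if s \<in> {0..L} then orb G (p s) else undefined)" for s
    unfolding orbit_segment_def p_def L_def ..
  have "0 \<le> L" by (simp add: L_def)
  then have "orbit_segment G x q \<in> {0..L} \<rightarrow>\<^sub>E orbit_space G"
    and "orbit_segment G x q 0 = orb G x"
    and "orbit_segment G x q L = orb G y"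
    using pL orb_eq[OF G qy] by (auto simp: seg orbit_space_def p_def)
  with \<open>0 \<le> L\<close> show ?thesis
    unfolding geodesics_between_def min_geodesic_def L[symmetric] by (simp add: seg dist)
qed

lemma orbit_segment_eq_imp_stab:
  assumes p: "p \<in> closest_points G x y" and q: "q \<in> closest_points G x y"
    and eq: "orbit_segment G x p = orbit_segment G x q"
  shows "\<exists>h\<in>stab G x. h *v q = p"
proof -
  define L where "L = qdist (orb G x) (orb G y)"
  have py: "p \<in> orb G y" "norm (p - x) = L" and qy: "q \<in> orb G y" "norm (q - x) = L"
    using p q unfolding closest_points_iff L_def by auto
  have half: "orbit_segment G x v (L/2) = orb G (midpoint x v)" if "norm (v - x) = L" for v
  proof -
    have "x + ((L/2) / L) *\<^sub>R (v - x) = midpoint x v"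
      using that by (cases "L = 0") (auto simp: midpoint_def vec_eq_iff field_simps)
    then show ?thesis using that norm_ge_zero[of "v - x"] unfolding orbit_segment_def by simp
  qed
  have "orb G (midpoint x p) = orb G (midpoint x q)"
    using fun_cong[OF eq, of "L/2"] unfolding half[OF py(2)] half[OF qy(2)] .
  then have "midpoint x p \<in> orb G (midpoint x q)" using orb_eq_iff[OF G] by blast
  then obtain g where g: "g \<in> G" "g *v midpoint x q = midpoint x p" by (rule orb_memE)
  have g_midpoint: "g *v midpoint a b = midpoint (g *v a) (g *v b)" for a b
    by (simp add: midpoint_linear_image matrix_vector_mul_linear)
  have "dist (g *v x) (midpoint x p) = dist x (midpoint x q)"
    using orth_subgroup_norm[OF G g(1), of "x - midpoint x q"]
    by (simp add: dist_norm g(2)[symmetric] matrix_vector_mult_diff_distrib)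
  also have "\<dots> = L/2" using dist_midpoint(1)[of x q] qy(2) by (simp add: dist_norm norm_minus_commute)
  finally have "dist (g *v x) (midpoint x p) \<le> L/2" by simp
  moreover have "dist (midpoint x p) p \<le> L/2"
    using dist_midpoint(4)[of x p] py(2) by (simp add: dist_norm norm_minus_commute)
  moreover have "2 * (L/2) \<le> dist (g *v x) p"
    using qdist_le[OF orb_mult[OF g(1)] py(1)] by (simp add: L_def dist_norm)
  ultimately have "midpoint x p = midpoint (g *v x) p" by (rule midpoint_of_dist_le)
  then have gx: "g *v x = x" by (simp add: midpoint_eq_iff)
  then have "midpoint x (g *v q) = midpoint x p" using g(2) g_midpoint by simp
  then have "g *v q = p" by (simp add: midpoint_def)
  then show ?thesis using g(1) gx unfolding stab_def by blast
qed

lemma geodesic_eq_orbit_segment: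
  assumes "\<gamma> \<in> geodesics_between (orbit_space G) qdist (orb G x) (orb G y)"
  obtains q where "q \<in> closest_points G x y" "\<gamma> = orbit_segment G x q"
proof -
  define L where "L = qdist (orb G x) (orb G y)"
  have L0: "0 \<le> L" and \<gamma>: "\<gamma> \<in> {0..L} \<rightarrow>\<^sub>E orbit_space G"
    and \<gamma>_dist: "\<And>s t. s \<in> {0..L} \<Longrightarrow> t \<in> {0..L} \<Longrightarrow> qdist (\<gamma> s) (\<gamma> t) = \<bar>s - t\<bar>"
    and \<gamma>0: "\<gamma> 0 = orb G x" and \<gamma>L: "\<gamma> L = orb G y"
    using assms unfolding geodesics_between_def min_geodesic_def L_def by auto
  have mid: "L/2 \<in> {0..L}" and end0: "0 \<in> {0..L}" and endL: "L \<in> {0..L}" using L0 by auto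
  obtain z where z: "z \<in> \<gamma> (L/2)" "orb G z = \<gamma> (L/2)" "norm (x - z) = qdist (orb G x) (\<gamma> (L/2))"
    by (rule orbit_space_attained[OF PiE_mem[OF \<gamma> mid]])
  have xz: "dist x z = L/2" using z(3) \<gamma>_dist[OF end0 mid] \<gamma>0 L0 by (simp add: dist_norm)
  obtain q where q: "q \<in> orb G y" "norm (z - q) = qdist (orb G z) (orb G y)"
    by (rule qdist_orb_attained)
  have zq: "dist z q = L/2" using q(2) \<gamma>_dist[OF mid endL] z(2) \<gamma>L L0 by (simp add: dist_norm)
  have "2 * (L/2) \<le> dist x q"
    using qdist_le[OF orb_refl[OF G] q(1), of x] by (simp add: L_def dist_norm)
  then have z_mid: "z = midpoint x q" using midpoint_of_dist_le[of x z "L/2" q] xz zq by simp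
  then have xq: "dist x q = L" using xz dist_midpoint(1)[of x q] by simp
  then have qc: "q \<in> closest_points G x y"
    unfolding closest_points_iff L_def using q(1) by (simp add: dist_norm norm_minus_commute)
  have "\<gamma> s = orbit_segment G x q s" for s
  proof (cases "s \<in> {0..L}")
    case False
    then show ?thesis using PiE_arb[OF \<gamma> False] xq
      by (auto simp: orbit_segment_def dist_norm norm_minus_commute)
  next
    case s: True
    obtain w where w: "w \<in> \<gamma> s" "orb G w = \<gamma> s" "norm (z - w) = qdist (orb G z) (\<gamma> s)"
      by (rule orbit_space_attained[OF PiE_mem[OF \<gamma> s]])
    have "w = x + (s / L) *\<^sub>R (q - x)" if "L > 0"
    proof (rule segment_point_of_dists[OF xq that s])
      show "dist (midpoint x q) w \<le> \<bar>L/2 - s\<bar>"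
        using w(3) z(2) \<gamma>_dist[OF mid s] z_mid by (simp add: dist_norm)
      have "qdist (\<gamma> 0) (\<gamma> s) \<le> norm (x - w)"
        unfolding \<gamma>0 by (rule qdist_le[OF orb_refl[OF G] w(1)])
      then show "s \<le> dist x w" using \<gamma>_dist[OF end0 s] s by (simp add: dist_norm)
      have "qdist (\<gamma> s) (\<gamma> L) \<le> norm (w - q)"
        unfolding \<gamma>L by (rule qdist_le[OF w(1) q(1)])
      then show "L - s \<le> dist w q" using \<gamma>_dist[OF s endL] s by (simp add: dist_norm)
    qed
    moreover have "\<gamma> s = orb G x" if "L = 0" using that s \<gamma>0 by simp
    ultimately show ?thesis
      using s w(2) L0 xq by (cases "L = 0") (simp_all add: orbit_segment_def dist_norm norm_minus_commute)
  qed
  then show ?thesis using that qc by blast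
qed

lemma orbit_segment_eq_iff:
  assumes "p \<in> closest_points G x y" "q \<in> closest_points G x y"
  shows "orbit_segment G x p = orbit_segment G x q \<longleftrightarrow> orb (stab G x) p = orb (stab G x) q"
proof
  assume "orbit_segment G x p = orbit_segment G x q"
  then obtain h where "h \<in> stab G x" "h *v q = p"
    using orbit_segment_eq_imp_stab[OF assms] by blast
  then have "p \<in> orb (stab G x) q" unfolding orb_def by blast
  then show "orb (stab G x) p = orb (stab G x) q" by (rule orb_eq[OF orth_subgroup_stab[OF G]])
next
  assume "orb (stab G x) p = orb (stab G x) q"
  then have "p \<in> orb (stab G x) q" by (simp add: orb_eq_iff[OF orth_subgroup_stab[OF G]])
  then obtain h where "h \<in> stab G x" "p = h *v q" unfolding orb_def by blast
  then show "orbit_segment G x p = orbit_segment G x q" using orbit_segment_stab[OF G] by blast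
qed

lemma geodesics_between_eq_image_orbit_segment:
  "geodesics_between (orbit_space G) qdist (orb G x) (orb G y)
    = orbit_segment G x ` closest_points G x y"
proof
  show "geodesics_between (orbit_space G) qdist (orb G x) (orb G y)
      \<subseteq> orbit_segment G x ` closest_points G x y"
    using geodesic_eq_orbit_segment by (metis image_eqI subsetI)
  show "orbit_segment G x ` closest_points G x y
      \<subseteq> geodesics_between (orbit_space G) qdist (orb G x) (orb G y)"
    using orbit_segment_geodesic by blast
qed

end

theorem lemma40:
  fixes G :: "(real^'n^'n) set" and x y :: "real^'n"
  assumes "orth_subgroup G"
    and "\<forall>z. closed (orb G z)"
  shows "\<exists>f. bij_betw f (geodesics_between (orbit_space G) qdist (orb G x) (orb G y))
                       (action_orbits (stab G x) (closest_points G x y))"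
proof -
  let ?S = "closest_points G x y"
  have closed: "closed (orb G z)" for z using assms(2) by blast
  have "geodesics_between (orbit_space G) qdist (orb G x) (orb G y) = orbit_segment G x ` ?S"
    by (rule geodesics_between_eq_image_orbit_segment[OF assms(1) closed])
  moreover have "action_orbits (stab G x) ?S = orb (stab G x) ` ?S"
    unfolding action_orbits_def orb_def by blast
  moreover have "orbit_segment G x p = orbit_segment G x q \<longleftrightarrow> orb (stab G x) p = orb (stab G x) q"
    if "p \<in> ?S" "q \<in> ?S" for p q
    by (rule orbit_segment_eq_iff[OF assms(1) closed that])
  ultimately show ?thesis
    using bij_betw_image_classes[of ?S "orbit_segment G x" "orb (stab G x)"] by auto
qed

end
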